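(* Let $S,T\subseteq(\Sigma\cup\Gamma)^*$ be regular languages of finite shiftlag. Then $\mathit{minsync}(S,T)$ is regular if and only if $\mathit{allsync}(S,T)$ is regular.
   Context: $\Sigma,\Gamma$ are disjoint finite alphabets. For $w\in(\Sigma\cup\Gamma)^*$, $\llbracket w\rrbracket=(\pi_{\mathtt i}(w),\pi_{\mathtt o}(w))$ where $\pi_{\mathtt i}$ (resp. $\pi_{\mathtt o}$) deletes all letters of $\Gamma$ (resp. $\Sigma$), and $\llbracket L\rrbracket=\{\llbracket w\rrbracket:w\in L\}$. A position $i$ of $w$ is $\geq k$-lagged if the absolute difference between the numbers of $\Sigma$-letters and $\Gamma$-letters in $w[1..i]$ is at least $k$. A shift of $w$ is a position $i\in\{1,\dots,|w|-1\}$ with exactly one of $w[i],w[i+1]$ in $\Sigma$; shifts $i<j$ are consecutive if no shift lies strictly between them. $\mathit{shift}(w)$ is the number of shifts; $\mathit{shiftlag}(w)$ is the maximal $n$ such that $w$ contains $n$ consecutive shifts all $\geq n$-lagged. A language has finite shift (resp. finite shiftlag) if the supremum of $\mathit{shift}$ (resp. $\mathit{shiftlag}$) over its words is finite; $\mathrm{Reg}_{\mathsf{FS}}$ denotes the class of regular languages of finite shift. For $x\in(\Sigma\cup\Gamma)^*$, $x^{-1}T=\{z: xz\in T\}$, and $w[1,i]$ is the prefix of $w$ of length $i$. For $w,w'\in T$ with $\llbracket w\rrbracket=\llbracket w'\rrbracket$, write $w\preceq_T w'$ if for all $i\le|w|$, $(w'[1,i])^{-1}T\in\mathrm{Reg}_{\mathsf{FS}}$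 implies $(w[1,i])^{-1}T\in\mathrm{Reg}_{\mathsf{FS}}$. Define $\mathit{minsync}(S,T)=\{w\in T:\llbracket w\rrbracket\in\llbracket S\rrbracket,\ w\preceq_T w'\text{ for all }w'\in T\text{ with }\llbracket w'\rrbracket=\llbracket w\rrbracket\}$ and $\mathit{allsync}(S,T)=\{w\in T:\llbracket w\rrbracket\in\llbracket S\rrbracket\}$. *)

theory Defs
  imports Main
begin

text \<open>Letters: Inl a is a letter of Sigma (input), Inr b a letter of Gamma (output).
  The alphabets are the finite types 's and 'g; they are disjoint by construction.\<close>

type_synonym ('s,'g) word = "('s + 'g) list"

definition regular :: "'a list set \<Rightarrow> bool" where
  "regular L \<longleftrightarrow> (\<exists>(Q::nat set) \<delta> q0 F. finite Q \<and> q0 \<in> Q \<and>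
      (\<forall>q\<in>Q. \<forall>a. \<delta> q a \<in> Q) \<and> F \<subseteq> Q \<and> L = {w. foldl \<delta> q0 w \<in> F})"

definition pi_i :: "('s,'g) word \<Rightarrow> 's list" where
  "pi_i w = map projl (filter isl w)"

definition pi_o :: "('s,'g) word \<Rightarrow> 'g list" where
  "pi_o w = map projr (filter (\<lambda>x. \<not> isl x) w)"

definition sem :: "('s,'g) word \<Rightarrow> 's list \<times> 'g list" where
  "sem w = (pi_i w, pi_o w)"

definition sem_lang :: "('s,'g) word set \<Rightarrow> ('s list \<times> 'g list) set" where
  "sem_lang L = sem ` L"

text \<open>Positions are 1-based: position i refers to w!(i-1); the prefix w[1..i] is take i w.\<close>
definition lag :: "('s,'g) word \<Rightarrow> nat \<Rightarrow> int" where
  "lag w i = \<bar>int (length (filter isl (take i w))) - int (length (filter (\<lambda>x. \<not> isl x) (take i w)))\<bar>"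

definition lagged :: "('s,'g) word \<Rightarrow> nat \<Rightarrow> nat \<Rightarrow> bool" where
  "lagged w k i \<longleftrightarrow> lag w i \<ge> int k"

definition shifts :: "('s,'g) word \<Rightarrow> nat set" where
  "shifts w = {i. 1 \<le> i \<and> i < length w \<and> isl (w ! (i - 1)) \<noteq> isl (w ! i)}"

definition shift :: "('s,'g) word \<Rightarrow> nat" where
  "shift w = card (shifts w)"

definition consec_lagged_shifts :: "('s,'g) word \<Rightarrow> nat \<Rightarrow> nat \<Rightarrow> bool" where
  "consec_lagged_shifts w n k \<longleftrightarrow> (\<exists>f :: nat \<Rightarrow> nat.
     (\<forall>j<n. f j \<in> shifts w \<and> lagged w k (f j)) \<and>
     (\<forall>j. Suc j < n \<longrightarrow> f j < f (Suc j) \<and> (\<forall>s\<in>shifts w. \<not> (f j < s \<and> s < f (Suc j)))))"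

definition shiftlag :: "('s,'g) word \<Rightarrow> nat" where
  "shiftlag w = Max {n. consec_lagged_shifts w n n}"

definition finite_shift :: "('s,'g) word set \<Rightarrow> bool" where
  "finite_shift L \<longleftrightarrow> bdd_above (shift ` L)"

definition finite_shiftlag :: "('s,'g) word set \<Rightarrow> bool" where
  "finite_shiftlag L \<longleftrightarrow> bdd_above (shiftlag ` L)"

definition RegFS :: "('s,'g) word set \<Rightarrow> bool" where
  "RegFS L \<longleftrightarrow> regular L \<and> finite_shift L"

definition lquot :: "'a list \<Rightarrow> 'a list set \<Rightarrow> 'a list set" where
  "lquot x T = {z. x @ z \<in> T}"

definition preceq :: "('s,'g) word set \<Rightarrow> ('s,'g) word \<Rightarrow> ('s,'g) word \<Rightarrow> bool" where
  "preceq T w w' \<longleftrightarrow> w \<in> T \<and> w' \<in> T \<and> sem w = sem w' \<and>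
     (\<forall>i\<le>length w. RegFS (lquot (take i w') T) \<longrightarrow> RegFS (lquot (take i w) T))"

definition minsync :: "('s,'g) word set \<Rightarrow> ('s,'g) word set \<Rightarrow> ('s,'g) word set" where
  "minsync S T = {w \<in> T. sem w \<in> sem_lang S \<and>
      (\<forall>w'\<in>T. sem w' = sem w \<longrightarrow> preceq T w w')}"

definition allsync :: "('s,'g) word set \<Rightarrow> ('s,'g) word set \<Rightarrow> ('s,'g) word set" where
  "allsync S T = {w \<in> T. sem w \<in> sem_lang S}"

end

theory Submission
  imports Defs "HOL-Library.Sublist"
begin

text \<open>
  Call a prefix x of T bad if its quotient x\<inverse>T has infinite shift; quotients of a regular
  language are regular, so x\<inverse>T is in Reg_FS exactly when x is not bad. Bad prefixes are
  closed under taking prefixes, so w \<preceq>_T w' only compares the positions at which w and w'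
  first have a good prefix. Hence minsync(S,T) is allsync(S,T) minus the words of T strictly
  dominated (good strictly earlier) by another synchronisation of the same pair in T, and
  allsync(S,T) is the set of words of T dominated (good no later) by a word of minsync(S,T).

  It remains to show that for regular P \<subseteq> T the words of T dominated by a word of P form a
  regular language. Finite shiftlag of T bounds the lag of bad prefixes, so as long as both
  words are bad their input and output counts differ by a bounded amount, recorded in a finite
  buffer. Once the witness from P has become good, its residual language has finite shift, and
  the semantics of a regular language of finite shift is a recognizable relation (a finite union
  of products of regular languages); this makes the rest of the synchronisation check regular.
\<close>

section \<open>Regular languages via left quotients\<close>

lemma lquot_append: "lquot (x @ y) L = lquot y (lquot x L)"
  by (simp add: lquot_def)

lemma regular_imp_finite_lquots:
  assumes "regular L"
  shows "finite (range (\<lambda>x. lquot x L))"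
proof -
  obtain Q :: "nat set" and \<delta> q0 F where
    Q: "finite Q" "q0 \<in> Q" "\<forall>q\<in>Q. \<forall>a. \<delta> q a \<in> Q" and L: "L = {w. foldl \<delta> q0 w \<in> F}"
    using assms unfolding regular_def by blast
  have run_in_Q: "foldl \<delta> q x \<in> Q" if "q \<in> Q" for q x
    using that by (induction x arbitrary: q) (use Q(3) in auto)
  have "lquot x L = {z. foldl \<delta> (foldl \<delta> q0 x) z \<in> F}" for x
    unfolding lquot_def L by simp
  then have "range (\<lambda>x. lquot x L) \<subseteq> (\<lambda>q. {z. foldl \<delta> q z \<in> F}) ` Q"
    using run_in_Q[OF Q(2)] by blast
  then show ?thesis
    using Q(1) finite_subset by blast
qed

lemma finite_lquots_imp_regular:
  assumes "finite (range (\<lambda>x. lquot x L))"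
  shows "regular L"
proof -
  let ?R = "range (\<lambda>x. lquot x L)"
  obtain f :: "_ \<Rightarrow> nat" where f: "inj_on f ?R"
    using finite_imp_inj_to_nat_seg[OF assms] by blast
  define \<delta> where "\<delta> q a = f (lquot [a] (inv_into ?R f q))" for q a
  define F where "F = f ` {K \<in> ?R. [] \<in> K}"
  have \<delta>: "\<delta> (f (lquot x L)) a = f (lquot (x @ [a]) L)" for x a
    using f unfolding \<delta>_def by (simp add: lquot_append)
  have run: "foldl \<delta> (f (lquot x L)) w = f (lquot (x @ w) L)" for x w
    by (induction w arbitrary: x) (simp_all add: \<delta>)
  have "w \<in> L \<longleftrightarrow> f (lquot w L) \<in> F" for w
  proof -
    have "f (lquot w L) \<in> F \<longleftrightarrow> lquot w L \<in> {K \<in> ?R. [] \<in> K}"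
      unfolding F_def by (rule inj_on_image_mem_iff[OF f]) auto
    then show ?thesis
      by (simp add: lquot_def)
  qed
  then have "L = {w. foldl \<delta> (f (lquot [] L)) w \<in> F}"
    using run[of "[]"] by auto
  moreover have "\<forall>q\<in>f ` ?R. \<forall>a. \<delta> q a \<in> f ` ?R"
    using \<delta> by auto
  moreover have "f (lquot [] L) \<in> f ` ?R"
    by (intro imageI rangeI)
  moreover have "finite (f ` ?R)"
    using assms by (rule finite_imageI)
  moreover have "F \<subseteq> f ` ?R"
    unfolding F_def by blast
  ultimately show ?thesis
    unfolding regular_def by (intro exI conjI)
qed

lemma regular_iff_finite_lquots: "regular L \<longleftrightarrow> finite (range (\<lambda>x. lquot x L))"
  using regular_imp_finite_lquots finite_lquots_imp_regular by blast

lemma regularI_lquot: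
  assumes "finite U" "\<And>x. \<sigma> x \<in> U" "\<And>x. lquot x L = G (\<sigma> x)"
  shows "regular L"
proof -
  have "range (\<lambda>x. lquot x L) \<subseteq> G ` U"
    using assms(2,3) by auto
  then show ?thesis
    unfolding regular_iff_finite_lquots using assms(1) finite_subset by blast
qed

lemma regular_lquot:
  assumes "regular L"
  shows "regular (lquot x L)"
proof (rule regularI_lquot[where \<sigma>="\<lambda>y. lquot (x @ y) L" and G=id])
  show "finite (range (\<lambda>x. lquot x L))"
    using assms by (simp add: regular_iff_finite_lquots)
qed (rule rangeI, simp add: lquot_append)

lemma regular_Int:
  assumes "regular A" "regular B"
  shows "regular (A \<inter> B)"
  by (rule regularI_lquot[where \<sigma>="\<lambda>x. (lquot x A, lquot x B)" and G="\<lambda>(X, Y). X \<inter> Y"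
        and U="range (\<lambda>x. lquot x A) \<times> range (\<lambda>x. lquot x B)"])
     (use assms in \<open>auto simp: regular_iff_finite_lquots lquot_def\<close>)

lemma regular_Diff:
  assumes "regular A" "regular B"
  shows "regular (A - B)"
  by (rule regularI_lquot[where \<sigma>="\<lambda>x. (lquot x A, lquot x B)" and G="\<lambda>(X, Y). X - Y"
        and U="range (\<lambda>x. lquot x A) \<times> range (\<lambda>x. lquot x B)"])
     (use assms in \<open>auto simp: regular_iff_finite_lquots lquot_def\<close>)

lemma regular_singleton: "regular {e}"
proof (rule regularI_lquot[where \<sigma>="\<lambda>x. lquot x {e}" and G=id
      and U="insert {} ((\<lambda>k. {drop k e}) ` {..length e})"])
  fix x
  show "lquot x {e} \<in> insert {} ((\<lambda>k. {drop k e}) ` {..length e})"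
  proof (cases "prefix x e")
    case True
    then obtain r where e: "e = x @ r"
      by (auto simp: prefix_def)
    then have "lquot x {e} = {drop (length x) e}" "length x \<le> length e"
      unfolding lquot_def by auto
    then show ?thesis
      by blast
  next
    case False
    then have "lquot x {e} = {}"
      unfolding lquot_def prefix_def by auto
    then show ?thesis by simp
  qed
qed simp_all

lemma regular_hd: "regular {y. y = [] \<or> P (hd y)}"
proof (rule regularI_lquot[where \<sigma>="\<lambda>x. lquot x {y. y = [] \<or> P (hd y)}" and G=id
      and U="{{y. y = [] \<or> P (hd y)}, UNIV, {}}"])
  fix x
  show "lquot x {y. y = [] \<or> P (hd y)} \<in> {{y. y = [] \<or> P (hd y)}, UNIV, {}}"
    by (cases x) (auto simp: lquot_def)
qed simp_all

definition conc :: "'a list set \<Rightarrow> 'a list set \<Rightarrow> 'a list set" where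
  "conc A B = {x @ y | x y. x \<in> A \<and> y \<in> B}"

lemma lquot_conc:
  "lquot w (conc A B) =
     conc (lquot w A) B \<union> \<Union> {lquot (drop k w) B | k. k \<le> length w \<and> take k w \<in> A}"
proof (intro set_eqI iffI)
  fix z
  assume "z \<in> lquot w (conc A B)"
  then obtain x y where "w @ z = x @ y" "x \<in> A" "y \<in> B"
    unfolding lquot_def conc_def by blast
  then obtain us where "w = x @ us \<and> us @ z = y \<or> w @ us = x \<and> z = us @ y"
    by (auto simp: append_eq_append_conv2)
  then show "z \<in> conc (lquot w A) B \<union> \<Union> {lquot (drop k w) B | k. k \<le> length w \<and> take k w \<in> A}"
  proof (elim disjE conjE)
    assume "w = x @ us" "us @ z = y"
    then have "z \<in> lquot (drop (length x) w) B" "take (length x) w \<in> A" "length x \<le> length w"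
      using \<open>x \<in> A\<close> \<open>y \<in> B\<close> by (simp_all add: lquot_def)
    then show ?thesis
      by blast
  next
    assume "w @ us = x" "z = us @ y"
    then have "us \<in> lquot w A"
      using \<open>x \<in> A\<close> by (simp add: lquot_def)
    then show ?thesis
      using \<open>z = us @ y\<close> \<open>y \<in> B\<close> unfolding conc_def by blast
  qed
next
  fix z
  assume "z \<in> conc (lquot w A) B \<union> \<Union> {lquot (drop k w) B | k. k \<le> length w \<and> take k w \<in> A}"
  then show "z \<in> lquot w (conc A B)"
  proof (elim UnE)
    assume "z \<in> conc (lquot w A) B"
    then obtain x y where xy: "z = x @ y" "w @ x \<in> A" "y \<in> B"
      unfolding conc_def lquot_def by blast
    then have "w @ z = (w @ x) @ y"
      by simp
    then show ?thesis
      unfolding conc_def lquot_def using xy by blast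
  next
    assume "z \<in> \<Union> {lquot (drop k w) B | k. k \<le> length w \<and> take k w \<in> A}"
    then obtain k where "take k w \<in> A" "drop k w @ z \<in> B"
      unfolding lquot_def by blast
    moreover have "w @ z = take k w @ (drop k w @ z)"
      by simp
    ultimately show ?thesis
      unfolding conc_def lquot_def by blast
  qed
qed

lemma regular_conc:
  assumes "regular A" "regular B"
  shows "regular (conc A B)"
proof (rule regularI_lquot[where
      \<sigma>="\<lambda>w. (lquot w A, {lquot (drop k w) B | k. k \<le> length w \<and> take k w \<in> A})"
      and U="range (\<lambda>x. lquot x A) \<times> Pow (range (\<lambda>x. lquot x B))"
      and G="\<lambda>(X, Y). conc X B \<union> \<Union> Y"])
  show "finite (range (\<lambda>x. lquot x A) \<times> Pow (range (\<lambda>x. lquot x B)))"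
    using assms by (simp add: regular_iff_finite_lquots)
  fix w
  have "{lquot (drop k w) B | k. k \<le> length w \<and> take k w \<in> A} \<subseteq> range (\<lambda>x. lquot x B)"
    by blast
  then show "(lquot w A, {lquot (drop k w) B | k. k \<le> length w \<and> take k w \<in> A})
     \<in> range (\<lambda>x. lquot x A) \<times> Pow (range (\<lambda>x. lquot x B))"
    by simp
qed (simp add: lquot_conc)

section \<open>Projections, lag and shifts\<close>

lemma pi_i_append [simp]: "pi_i (u @ v) = pi_i u @ pi_i v"
  and pi_o_append [simp]: "pi_o (u @ v) = pi_o u @ pi_o v"
  by (simp_all add: pi_i_def pi_o_def)

lemma pi_map_Inl [simp]: "pi_i (map Inl s) = s" "pi_o (map Inl s) = []"
  by (simp_all add: pi_i_def pi_o_def comp_def)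

lemma pi_map_Inr [simp]: "pi_i (map Inr t) = []" "pi_o (map Inr t) = t"
  by (simp_all add: pi_i_def pi_o_def comp_def)

lemma sem_Nil [simp]: "sem [] = ([], [])"
  by (simp add: sem_def pi_i_def pi_o_def)

lemma sem_append: "sem (u @ v) = (pi_i u @ pi_i v, pi_o u @ pi_o v)"
  by (simp add: sem_def)

lemma length_pi_i_plus_pi_o: "length (pi_i u) + length (pi_o u) = length u"
  unfolding pi_i_def pi_o_def by (simp add: sum_length_filter_compl)

lemma length_eq_if_sem_eq: "sem w = sem w' \<Longrightarrow> length w = length w'"
  using length_pi_i_plus_pi_o[of w] length_pi_i_plus_pi_o[of w'] by (simp add: sem_def)

definition word_lag :: "('s,'g) word \<Rightarrow> int" where
  "word_lag u = \<bar>int (length (pi_i u)) - int (length (pi_o u))\<bar>"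

lemma lag_eq_word_lag: "lag w i = word_lag (take i w)"
  by (simp add: lag_def word_lag_def pi_i_def pi_o_def)

lemma word_lag_Nil [simp]: "word_lag [] = 0"
  by (simp add: word_lag_def pi_i_def pi_o_def)

lemma word_lag_append_ge: "word_lag x - int (length y) \<le> word_lag (x @ y)"
  using length_pi_i_plus_pi_o[of y] unfolding word_lag_def by simp

lemma word_lag_append_le: "word_lag (x @ y) \<le> word_lag x + int (length y)"
  using length_pi_i_plus_pi_o[of y] unfolding word_lag_def by simp

lemma word_lag_le_length: "word_lag u \<le> int (length u)"
  using word_lag_append_le[of "[]" u] by simp

lemma word_lag_take_Suc: "word_lag (take (Suc i) w) \<le> word_lag (take i w) + 1"
proof (cases "i < length w")
  case True
  then show ?thesis
    using word_lag_append_le[of "take i w" "[w ! i]"] by (simp add: take_Suc_conv_app_nth)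
qed simp

lemma shifts_subset: "shifts w \<subseteq> {..<length w}"
  unfolding shifts_def by auto

lemma finite_shifts [simp]: "finite (shifts w)"
  using shifts_subset finite_subset by blast

lemma shifts_append_iff:
  "length x < s \<Longrightarrow> s \<in> shifts (x @ z) \<longleftrightarrow> s - length x \<in> shifts z"
  by (auto simp: shifts_def nth_append)

lemma shifts_append_shift: "(\<lambda>i. i + length x) ` shifts z \<subseteq> shifts (x @ z)"
proof
  fix s
  assume "s \<in> (\<lambda>i. i + length x) ` shifts z"
  then obtain i where "i \<in> shifts z" "s = i + length x"
    by blast
  moreover have "0 < i"
    using \<open>i \<in> shifts z\<close> by (simp add: shifts_def)
  ultimately show "s \<in> shifts (x @ z)"
    using shifts_append_iff[of x s z] by simp
qed

lemma shift_le_shift_append: "shift z \<le> shift (x @ z)"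
proof -
  have "shift z = card ((\<lambda>i. i + length x) ` shifts z)"
    unfolding shift_def by (simp add: card_image)
  also have "\<dots> \<le> shift (x @ z)"
    unfolding shift_def by (rule card_mono[OF finite_shifts shifts_append_shift])
  finally show ?thesis .
qed

lemma Suc_shift_le_shift_append:
  assumes "x \<noteq> []" "z \<noteq> []" "isl (last x) \<noteq> isl (hd z)"
  shows "Suc (shift z) \<le> shift (x @ z)"
proof -
  let ?S = "(\<lambda>i. i + length x) ` shifts z"
  have "(x @ z) ! (length x - 1) = last x" "(x @ z) ! length x = hd z"
    using assms(1,2) by (simp_all add: nth_append last_conv_nth hd_conv_nth)
  then have "length x \<in> shifts (x @ z)"
    using assms unfolding shifts_def by (auto simp: Suc_le_eq)
  then have "card (insert (length x) ?S) \<le> shift (x @ z)"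
    unfolding shift_def using shifts_append_shift by (intro card_mono) auto
  moreover have "length x \<notin> ?S"
    by (auto simp: shifts_def)
  then have "card (insert (length x) ?S) = Suc (shift z)"
    unfolding shift_def by (simp add: card_image)
  ultimately show ?thesis
    by simp
qed

lemma finite_shift_iff: "finite_shift L \<longleftrightarrow> (\<exists>M. \<forall>z\<in>L. shift z \<le> M)"
  unfolding finite_shift_def bdd_above_def by auto

lemma finite_shift_subset: "A \<subseteq> B \<Longrightarrow> finite_shift B \<Longrightarrow> finite_shift A"
  unfolding finite_shift_iff by blast

lemma finite_shift_lquot_append:
  assumes "finite_shift (lquot x L)"
  shows "finite_shift (lquot (x @ y) L)"
proof -
  obtain M where "\<forall>z\<in>lquot x L. shift z \<le> M"
    using assms finite_shift_iff by blast
  then have "\<forall>z\<in>lquot (x @ y) L. shift z \<le> M"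
    using shift_le_shift_append order_trans by (fastforce simp: lquot_def)
  then show ?thesis
    unfolding finite_shift_iff by blast
qed

lemma consec_lagged_shifts_le_length:
  assumes "consec_lagged_shifts w n k"
  shows "k \<le> length w \<or> n = 0"
proof (cases n)
  case (Suc m)
  obtain f where "\<forall>j<n. f j \<in> shifts w \<and> lagged w k (f j)"
    using assms unfolding consec_lagged_shifts_def by blast
  then have "lagged w k (f 0)"
    using Suc by blast
  then have "int k \<le> word_lag (take (f 0) w)"
    by (simp add: lagged_def lag_eq_word_lag)
  also have "\<dots> \<le> int (length w)"
    using word_lag_le_length[of "take (f 0) w"] by simp
  finally show ?thesis
    by simp
qed simp

lemma consec_lagged_shifts_le_shiftlag:
  assumes "consec_lagged_shifts w n n"
  shows "n \<le> shiftlag w"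
proof -
  have "{n. consec_lagged_shifts w n n} \<subseteq> {..length w}"
    using consec_lagged_shifts_le_length by fastforce
  then have "finite {n. consec_lagged_shifts w n n}"
    using finite_subset by blast
  then show ?thesis
    unfolding shiftlag_def using assms by (simp add: Max_ge)
qed

lemma sorted_list_of_set_no_elem_between:
  fixes A :: "'a::linorder set"
  assumes "finite A" "Suc j < card A" "a \<in> A"
  shows "\<not> (sorted_list_of_set A ! j < a \<and> a < sorted_list_of_set A ! Suc j)"
proof
  let ?xs = "sorted_list_of_set A"
  assume between: "?xs ! j < a \<and> a < ?xs ! Suc j"
  obtain p where p: "p < length ?xs" "?xs ! p = a"
    using assms(1,3) by (metis in_set_conv_nth set_sorted_list_of_set)
  show False
  proof (cases "p \<le> j")
    case True
    then have "?xs ! p \<le> ?xs ! j"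
      using assms(1,2) by (intro sorted_nth_mono) simp_all
    then show False
      using p between by auto
  next
    case False
    then have "?xs ! Suc j \<le> ?xs ! p"
      using p(1) by (intro sorted_nth_mono) simp_all
    then show False
      using p between by auto
  qed
qed

lemma consec_lagged_shifts_suffix:
  assumes "n \<le> shift z" and lagged: "\<forall>i\<in>shifts z. lagged (x @ z) k (i + length x)"
  shows "consec_lagged_shifts (x @ z) n k"
proof -
  define xs where "xs = sorted_list_of_set (shifts z)"
  have xs: "sorted_wrt (<) xs" "set xs = shifts z" "n \<le> length xs"
    using assms(1) unfolding xs_def shift_def by (simp_all add: strict_sorted_list_of_set)
  show ?thesis
    unfolding consec_lagged_shifts_def
  proof (rule exI[of _ "\<lambda>j. xs ! j + length x"], intro conjI allI impI ballI)
    fix j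
    assume "j < n"
    then have "xs ! j \<in> shifts z"
      using xs nth_mem by fastforce
    then show "xs ! j + length x \<in> shifts (x @ z)" "lagged (x @ z) k (xs ! j + length x)"
      using shifts_append_shift lagged by blast+
  next
    fix j
    assume "Suc j < n"
    then have j: "Suc j < length xs"
      using xs(3) by simp
    then show "xs ! j + length x < xs ! Suc j + length x"
      using xs(1) sorted_wrt_nth_less by fastforce
    fix s
    assume s: "s \<in> shifts (x @ z)"
    show "\<not> (xs ! j + length x < s \<and> s < xs ! Suc j + length x)"
    proof
      assume between: "xs ! j + length x < s \<and> s < xs ! Suc j + length x"
      then have "s - length x \<in> shifts z"
        using s shifts_append_iff[of x s z] by simp
      moreover have "Suc j < card (shifts z)"
        using j xs(2,3) unfolding xs_def by simp
      ultimately show False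
        using sorted_list_of_set_no_elem_between[of "shifts z" j "s - length x"] between
        unfolding xs_def by auto
    qed
  qed
qed

text \<open>If x had lag beyond N + length z, every shift of z would be N+1-lagged in x @ z, giving
  N+1 consecutive N+1-lagged shifts.\<close>

lemma word_lag_le_if_many_shifts:
  assumes "\<forall>w\<in>T. shiftlag w \<le> N" "x @ z \<in> T" "N < shift z"
  shows "word_lag x \<le> int (N + length z)"
proof (rule ccontr)
  assume large: "\<not> word_lag x \<le> int (N + length z)"
  have "lagged (x @ z) (Suc N) (i + length x)" if "i \<in> shifts z" for i
  proof -
    have "i \<le> length z"
      using that shifts_subset by fastforce
    then have "word_lag x - int i \<le> word_lag (x @ take i z)"
      using word_lag_append_ge[of x "take i z"] by simp
    then show ?thesis
      using large \<open>i \<le> length z\<close>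
      by (simp add: lagged_def lag_eq_word_lag add.commute[of i])
  qed
  then have "consec_lagged_shifts (x @ z) (Suc N) (Suc N)"
    using assms(3) by (intro consec_lagged_shifts_suffix) auto
  then show False
    using consec_lagged_shifts_le_shiftlag assms(1,2) by fastforce
qed

definition bad :: "('s,'g) word set \<Rightarrow> ('s,'g) word \<Rightarrow> bool" where
  "bad T x \<longleftrightarrow> \<not> finite_shift (lquot x T)"

lemma bad_append: "bad T (u @ x) \<longleftrightarrow> bad (lquot u T) x"
  unfolding bad_def by (simp add: lquot_append)

lemma bad_prefix: "bad T (x @ y) \<Longrightarrow> bad T x"
  unfolding bad_def using finite_shift_lquot_append by blast

lemma bad_take: "bad T x \<Longrightarrow> bad T (take i x)"
  using bad_prefix[of T "take i x" "drop i x"] by simp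

lemma bad_take_mono: "bad T (take i w) \<Longrightarrow> j \<le> i \<Longrightarrow> bad T (take j w)"
  using bad_take[of T "take i w" j] by (simp add: min_absorb1)

lemma bad_word_lag_bounded:
  fixes T :: "('s,'g) word set"
  assumes "regular T" "finite_shiftlag T"
  obtains B where "\<And>x. bad T x \<Longrightarrow> word_lag x \<le> int B"
proof -
  obtain N where N: "\<forall>w\<in>T. shiftlag w \<le> N"
    using assms(2) unfolding finite_shiftlag_def bdd_above_def by blast
  define Bad where "Bad = {K \<in> range (\<lambda>x. lquot x T). \<not> finite_shift K}"
  define witness :: "('s,'g) word set \<Rightarrow> ('s,'g) word"
    where "witness K = (SOME z. z \<in> K \<and> N < shift z)" for K
  have witness: "witness K \<in> K \<and> N < shift (witness K)" if "\<not> finite_shift K" for K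
  proof -
    have "\<exists>z. z \<in> K \<and> N < shift z"
      using that unfolding finite_shift_iff by (meson not_le_imp_less)
    then show ?thesis
      unfolding witness_def by (rule someI_ex)
  qed
  define B where "B = Max ((\<lambda>K. N + length (witness K)) ` Bad)"
  have "word_lag x \<le> int B" if "bad T x" for x
  proof -
    have "lquot x T \<in> Bad" "finite Bad"
      using that assms(1) unfolding Bad_def bad_def regular_iff_finite_lquots by auto
    then have "N + length (witness (lquot x T)) \<le> B"
      unfolding B_def by simp
    moreover have "word_lag x \<le> int (N + length (witness (lquot x T)))"
      using word_lag_le_if_many_shifts[OF N] witness[of "lquot x T"] that
      by (simp add: bad_def lquot_def)
    ultimately show ?thesis
      by linarith
  qed
  then show ?thesis
    using that by blast
qed

section \<open>Recognizable relations and the semantics of Reg_FS languages\<close>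

definition recognizable :: "('a list \<times> 'b list) set \<Rightarrow> bool" where
  "recognizable \<rho> \<longleftrightarrow>
     (\<exists>F. finite F \<and> (\<forall>(U, V)\<in>F. regular U \<and> regular V) \<and> \<rho> = (\<Union>(U, V)\<in>F. U \<times> V))"

definition rel_lquot :: "'a list \<Rightarrow> 'b list \<Rightarrow> ('a list \<times> 'b list) set \<Rightarrow> ('a list \<times> 'b list) set" where
  "rel_lquot a b \<rho> = {(s, t). (a @ s, b @ t) \<in> \<rho>}"

definition rel_conc ::
  "('a list \<times> 'b list) set \<Rightarrow> ('a list \<times> 'b list) set \<Rightarrow> ('a list \<times> 'b list) set" where
  "rel_conc \<rho>1 \<rho>2 = {(a @ c, b @ d) | a b c d. (a, b) \<in> \<rho>1 \<and> (c, d) \<in> \<rho>2}"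

lemma rel_concI: "(a, b) \<in> \<rho>1 \<Longrightarrow> (c, d) \<in> \<rho>2 \<Longrightarrow> (a @ c, b @ d) \<in> rel_conc \<rho>1 \<rho>2"
  unfolding rel_conc_def by blast

lemma rel_concE:
  assumes "p \<in> rel_conc \<rho>1 \<rho>2"
  obtains a b c d where "p = (a @ c, b @ d)" "(a, b) \<in> \<rho>1" "(c, d) \<in> \<rho>2"
  using assms unfolding rel_conc_def by blast

lemma recognizable_empty: "recognizable {}"
  unfolding recognizable_def by (rule exI[of _ "{}"]) simp

lemma recognizable_Times: "regular U \<Longrightarrow> regular V \<Longrightarrow> recognizable (U \<times> V)"
  unfolding recognizable_def by (rule exI[of _ "{(U, V)}"]) simp

lemma recognizable_singleton: "recognizable {(a, b)}"
  using recognizable_Times[OF regular_singleton regular_singleton] by simp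

lemma recognizable_Un:
  assumes "recognizable \<rho>1" "recognizable \<rho>2"
  shows "recognizable (\<rho>1 \<union> \<rho>2)"
proof -
  obtain F G where "finite F" "\<forall>(U, V)\<in>F. regular U \<and> regular V" "\<rho>1 = (\<Union>(U, V)\<in>F. U \<times> V)"
    "finite G" "\<forall>(U, V)\<in>G. regular U \<and> regular V" "\<rho>2 = (\<Union>(U, V)\<in>G. U \<times> V)"
    using assms unfolding recognizable_def by metis
  then show ?thesis
    unfolding recognizable_def by (intro exI[of _ "F \<union> G"]) auto
qed

lemma recognizable_UN:
  "finite I \<Longrightarrow> (\<And>i. i \<in> I \<Longrightarrow> recognizable (\<rho> i)) \<Longrightarrow> recognizable (\<Union>i\<in>I. \<rho> i)"
  by (induction I rule: finite_induct) (simp_all add: recognizable_empty recognizable_Un)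

lemma rel_conc_UN:
  "rel_conc (\<Union>(U, V)\<in>F. U \<times> V) (\<Union>(U', V')\<in>G. U' \<times> V')
     = (\<Union>((U, V), (U', V'))\<in>F \<times> G. conc U U' \<times> conc V V')"
proof (intro set_eqI iffI)
  fix p
  assume "p \<in> rel_conc (\<Union>(U, V)\<in>F. U \<times> V) (\<Union>(U', V')\<in>G. U' \<times> V')"
  then obtain a b c d where p: "p = (a @ c, b @ d)"
    "(a, b) \<in> (\<Union>(U, V)\<in>F. U \<times> V)" "(c, d) \<in> (\<Union>(U', V')\<in>G. U' \<times> V')"
    by (rule rel_concE)
  then obtain U V U' V' where UV: "(U, V) \<in> F" "a \<in> U" "b \<in> V"
    and UV': "(U', V') \<in> G" "c \<in> U'" "d \<in> V'"
    by blast
  have "p \<in> conc U U' \<times> conc V V'"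
    unfolding p(1) conc_def using UV UV' by blast
  then show "p \<in> (\<Union>((U, V), (U', V'))\<in>F \<times> G. conc U U' \<times> conc V V')"
    using UV(1) UV'(1) by force
next
  fix p
  assume "p \<in> (\<Union>((U, V), (U', V'))\<in>F \<times> G. conc U U' \<times> conc V V')"
  then obtain U V U' V' where UV: "(U, V) \<in> F" "(U', V') \<in> G" "p \<in> conc U U' \<times> conc V V'"
    by force
  then obtain a c b d where p: "p = (a @ c, b @ d)" "a \<in> U" "c \<in> U'" "b \<in> V" "d \<in> V'"
    unfolding conc_def by blast
  have "(a, b) \<in> (\<Union>(U, V)\<in>F. U \<times> V)" "(c, d) \<in> (\<Union>(U', V')\<in>G. U' \<times> V')"
    using UV p by blast+
  then show "p \<in> rel_conc (\<Union>(U, V)\<in>F. U \<times> V) (\<Union>(U', V')\<in>G. U' \<times> V')"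
    unfolding p(1) by (rule rel_concI)
qed

lemma recognizable_rel_conc:
  assumes "recognizable \<rho>1" "recognizable \<rho>2"
  shows "recognizable (rel_conc \<rho>1 \<rho>2)"
proof -
  obtain F where F: "finite F" "\<forall>(U, V)\<in>F. regular U \<and> regular V" "\<rho>1 = (\<Union>(U, V)\<in>F. U \<times> V)"
    using assms(1) unfolding recognizable_def by blast
  obtain G where G: "finite G" "\<forall>(U, V)\<in>G. regular U \<and> regular V" "\<rho>2 = (\<Union>(U, V)\<in>G. U \<times> V)"
    using assms(2) unfolding recognizable_def by blast
  have "recognizable (\<Union>((U, V), (U', V'))\<in>F \<times> G. conc U U' \<times> conc V V')"
    using F(1,2) G(1,2)
    by (intro recognizable_UN) (auto intro!: recognizable_Times regular_conc)
  then show ?thesis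
    unfolding F(3) G(3) rel_conc_UN .
qed

lemma rel_lquot_UN:
  "rel_lquot a b (\<Union>(U, V)\<in>F. U \<times> V) = (\<Union>(U, V)\<in>F. lquot a U \<times> lquot b V)"
  unfolding rel_lquot_def lquot_def by auto

lemma recognizable_rel_lquot:
  assumes "recognizable \<rho>"
  shows "recognizable (rel_lquot a b \<rho>)"
proof -
  obtain F where F: "finite F" "\<forall>(U, V)\<in>F. regular U \<and> regular V" "\<rho> = (\<Union>(U, V)\<in>F. U \<times> V)"
    using assms unfolding recognizable_def by blast
  have "recognizable (\<Union>(U, V)\<in>F. lquot a U \<times> lquot b V)"
    using F(1,2) by (intro recognizable_UN) (auto intro!: recognizable_Times regular_lquot)
  then show ?thesis
    unfolding F(3) rel_lquot_UN .
qed

lemma lquot_sem_vimage: "lquot u (sem -` \<rho>) = sem -` rel_lquot (pi_i u) (pi_o u) \<rho>"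
  unfolding lquot_def rel_lquot_def by (simp add: sem_append sem_def)

lemma regular_sem_vimage:
  assumes "recognizable \<rho>"
  shows "regular (sem -` \<rho>)"
proof -
  obtain F where F: "finite F" "\<forall>(U, V)\<in>F. regular U \<and> regular V" "\<rho> = (\<Union>(U, V)\<in>F. U \<times> V)"
    using assms unfolding recognizable_def by blast
  define Q where "Q = (\<Union>(U, V)\<in>F. range (\<lambda>x. lquot x U) \<times> range (\<lambda>x. lquot x V))"
  have "finite Q"
    unfolding Q_def using F(1,2) by (intro finite_UN_I) (auto simp: regular_iff_finite_lquots)
  define \<sigma> where "\<sigma> u = (\<lambda>(U, V). (lquot (pi_i u) U, lquot (pi_o u) V)) ` F" for u
  show ?thesis
  proof (rule regularI_lquot[where \<sigma>=\<sigma> and U="Pow Q" and G="\<lambda>S. sem -` (\<Union>(X, Y)\<in>S. X \<times> Y)"])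
    show "finite (Pow Q)"
      using \<open>finite Q\<close> by simp
    show "\<sigma> u \<in> Pow Q" for u
      unfolding \<sigma>_def Q_def by fast
    show "lquot u (sem -` \<rho>) = sem -` (\<Union>(X, Y)\<in>\<sigma> u. X \<times> Y)" for u
      unfolding lquot_sem_vimage F(3) rel_lquot_UN \<sigma>_def by (simp add: image_image split_def)
  qed
qed

definition block_lquots :: "('a \<Rightarrow> 'c) \<Rightarrow> 'c list set \<Rightarrow> 'c list set set" where
  "block_lquots h L = {lquot (map h s) L | s. s \<noteq> []}"

definition block_lang :: "('a \<Rightarrow> 'c) \<Rightarrow> 'c list set \<Rightarrow> 'c list set \<Rightarrow> 'a list set" where
  "block_lang h L K = {s. s \<noteq> [] \<and> lquot (map h s) L = K}"

lemma finite_block_lquots: "regular L \<Longrightarrow> finite (block_lquots h L)"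
  unfolding regular_iff_finite_lquots block_lquots_def by (rule finite_subset[rotated]) auto

lemma regular_block_lang:
  assumes "regular L"
  shows "regular (block_lang h L K)"
proof (rule regularI_lquot[where \<sigma>="\<lambda>t. (t = [], lquot (map h t) L)"
      and U="{True, False} \<times> range (\<lambda>x. lquot x L)"
      and G="\<lambda>(e, L'). {s. (\<not> e \<or> s \<noteq> []) \<and> lquot (map h s) L' = K}"])
  show "finite ({True, False} \<times> range (\<lambda>x. lquot x L))"
    using assms unfolding regular_iff_finite_lquots by simp
qed (auto simp: block_lang_def lquot_def)

lemma map_Inl_projl_takeWhile: "map (Inl \<circ> projl) (takeWhile isl z) = takeWhile isl z"
  by (induction z) auto

lemma map_Inr_projr_takeWhile:
  "map (Inr \<circ> projr) (takeWhile (\<lambda>c. \<not> isl c) z) = takeWhile (\<lambda>c. \<not> isl c) z"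
  by (induction z) auto

lemma sem_mem_Inl_block_decomp:
  assumes "z \<in> L" "z \<noteq> []" "isl (hd z)"
  shows "sem z \<in> (\<Union>K\<in>block_lquots Inl L.
    rel_conc (block_lang Inl L K \<times> {[]}) (sem ` (K \<inter> {y. y = [] \<or> isl (hd y) = False})))"
proof -
  define s where "s = map projl (takeWhile isl z)"
  define y where "y = dropWhile isl z"
  have z: "z = map Inl s @ y"
    unfolding s_def y_def by (simp add: map_Inl_projl_takeWhile)
  have "s \<noteq> []"
    unfolding s_def using assms(2,3) by (cases z) simp_all
  moreover have "y = [] \<or> isl (hd y) = False"
    unfolding y_def using hd_dropWhile[of isl z] by auto
  ultimately have "sem z \<in> rel_conc (block_lang Inl L (lquot (map Inl s) L) \<times> {[]})
      (sem ` (lquot (map Inl s) L \<inter> {y. y = [] \<or> isl (hd y) = False}))"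
    using rel_concI[of s "[]" _ "pi_i y" "pi_o y"] assms(1) z
    by (auto simp: block_lang_def lquot_def sem_def)
  moreover have "lquot (map Inl s) L \<in> block_lquots Inl L"
    unfolding block_lquots_def using \<open>s \<noteq> []\<close> by blast
  ultimately show ?thesis
    by blast
qed

lemma sem_mem_Inr_block_decomp:
  assumes "z \<in> L" "z \<noteq> []" "\<not> isl (hd z)"
  shows "sem z \<in> (\<Union>K\<in>block_lquots Inr L.
    rel_conc ({[]} \<times> block_lang Inr L K) (sem ` (K \<inter> {y. y = [] \<or> isl (hd y) = True})))"
proof -
  define t where "t = map projr (takeWhile (\<lambda>c. \<not> isl c) z)"
  define y where "y = dropWhile (\<lambda>c. \<not> isl c) z"
  have z: "z = map Inr t @ y"
    unfolding t_def y_def by (simp add: map_Inr_projr_takeWhile)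
  have "t \<noteq> []"
    unfolding t_def using assms(2,3) by (cases z) simp_all
  moreover have "y = [] \<or> isl (hd y) = True"
    unfolding y_def using hd_dropWhile[of "\<lambda>c. \<not> isl c" z] by auto
  ultimately have "sem z \<in> rel_conc ({[]} \<times> block_lang Inr L (lquot (map Inr t) L))
      (sem ` (lquot (map Inr t) L \<inter> {y. y = [] \<or> isl (hd y) = True}))"
    using rel_concI[of "[]" t _ "pi_i y" "pi_o y"] assms(1) z
    by (auto simp: block_lang_def lquot_def sem_def)
  moreover have "lquot (map Inr t) L \<in> block_lquots Inr L"
    unfolding block_lquots_def using \<open>t \<noteq> []\<close> by blast
  ultimately show ?thesis
    by blast
qed

lemma sem_decomp:
  "sem ` L = sem ` (L \<inter> {[]})
     \<union> (\<Union>K\<in>block_lquots Inl L.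
          rel_conc (block_lang Inl L K \<times> {[]}) (sem ` (K \<inter> {y. y = [] \<or> isl (hd y) = False})))
     \<union> (\<Union>K\<in>block_lquots Inr L.
          rel_conc ({[]} \<times> block_lang Inr L K) (sem ` (K \<inter> {y. y = [] \<or> isl (hd y) = True})))"
  (is "_ = ?E \<union> ?I \<union> ?O")
proof (intro set_eqI iffI)
  fix p
  assume "p \<in> sem ` L"
  then obtain z where z: "z \<in> L" "p = sem z"
    by blast
  then show "p \<in> ?E \<union> ?I \<union> ?O"
    using sem_mem_Inl_block_decomp[of z L] sem_mem_Inr_block_decomp[of z L]
    by (cases "z = []") auto
next
  fix p
  assume "p \<in> ?E \<union> ?I \<union> ?O"
  then consider "p \<in> ?E"
    | K s y where "p = (s @ pi_i y, pi_o y)" "s \<in> block_lang Inl L K" "y \<in> K"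
    | K t y where "p = (pi_i y, t @ pi_o y)" "t \<in> block_lang Inr L K" "y \<in> K"
    by (elim UnE UN_E rel_concE) (auto simp: sem_def)
  then show "p \<in> sem ` L"
  proof cases
    case (2 K s y)
    then have "map Inl s @ y \<in> L" "p = sem (map Inl s @ y)"
      by (auto simp: block_lang_def lquot_def sem_def)
    then show ?thesis
      by blast
  next
    case (3 K t y)
    then have "map Inr t @ y \<in> L" "p = sem (map Inr t @ y)"
      by (auto simp: block_lang_def lquot_def sem_def)
    then show ?thesis
      by blast
  qed blast
qed

lemma recognizable_sem_Int_Nil: "recognizable (sem ` (A \<inter> {[]}))"
  by (cases "[] \<in> A") (simp_all add: recognizable_singleton recognizable_empty)

text \<open>Splitting off the first maximal block of letters on one side (\<open>sem_decomp\<close>) leaves a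
  remainder with one shift fewer, which drives the induction on the shift bound.\<close>

lemma recognizable_sem_after_block:
  fixes L :: "('s,'g) word set"
  assumes IH: "\<And>L' :: ('s,'g) word set.
      regular L' \<Longrightarrow> \<forall>z\<in>L'. Suc (shift z) \<le> C \<Longrightarrow> recognizable (sem ` L')"
    and L: "regular L" "\<forall>z\<in>L. shift z \<le> C"
    and x: "x \<noteq> []" "\<forall>a\<in>set x. isl a \<noteq> b"
  shows "recognizable (sem ` (lquot x L \<inter> {y. y = [] \<or> isl (hd y) = b}))"
proof -
  let ?K = "lquot x L \<inter> {y. y = [] \<or> isl (hd y) = b}"
  have "recognizable (sem ` (?K - {[]}))"
  proof (rule IH)
    show "regular (?K - {[]})"
      by (intro regular_Diff regular_Int regular_lquot L regular_hd regular_singleton)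
    show "\<forall>z\<in>?K - {[]}. Suc (shift z) \<le> C"
    proof
      fix z
      assume z: "z \<in> ?K - {[]}"
      then have "isl (last x) \<noteq> isl (hd z)"
        using x last_in_set by fastforce
      then have "Suc (shift z) \<le> shift (x @ z)"
        using x(1) z by (intro Suc_shift_le_shift_append) auto
      moreover have "x @ z \<in> L"
        using z by (simp add: lquot_def)
      ultimately show "Suc (shift z) \<le> C"
        using L(2) by fastforce
    qed
  qed
  then have "recognizable (sem ` (?K \<inter> {[]}) \<union> sem ` (?K - {[]}))"
    by (intro recognizable_Un recognizable_sem_Int_Nil)
  moreover have "sem ` (?K \<inter> {[]}) \<union> sem ` (?K - {[]}) = sem ` ?K"
    by blast
  ultimately show ?thesis
    by simp
qed

lemma recognizable_sem_step:
  fixes L :: "('s,'g) word set"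
  assumes IH: "\<And>L' :: ('s,'g) word set.
      regular L' \<Longrightarrow> \<forall>z\<in>L'. Suc (shift z) \<le> C \<Longrightarrow> recognizable (sem ` L')"
    and L: "regular L" "\<forall>z\<in>L. shift z \<le> C"
  shows "recognizable (sem ` L)"
proof -
  note tail = recognizable_sem_after_block[OF IH L]
  have "recognizable (sem ` (K \<inter> {y. y = [] \<or> isl (hd y) = False}))"
    if "K \<in> block_lquots Inl L" for K
    using that tail[of "map Inl s" False for s] unfolding block_lquots_def by auto
  then have "recognizable (\<Union>K\<in>block_lquots Inl L.
      rel_conc (block_lang Inl L K \<times> {[]}) (sem ` (K \<inter> {y. y = [] \<or> isl (hd y) = False})))"
    by (intro recognizable_UN finite_block_lquots L(1) recognizable_rel_conc recognizable_Times
        regular_block_lang regular_singleton)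
  moreover have "recognizable (sem ` (K \<inter> {y. y = [] \<or> isl (hd y) = True}))"
    if "K \<in> block_lquots Inr L" for K
    using that tail[of "map Inr t" True for t] unfolding block_lquots_def by auto
  then have "recognizable (\<Union>K\<in>block_lquots Inr L.
      rel_conc ({[]} \<times> block_lang Inr L K) (sem ` (K \<inter> {y. y = [] \<or> isl (hd y) = True})))"
    by (intro recognizable_UN finite_block_lquots L(1) recognizable_rel_conc recognizable_Times
        regular_block_lang regular_singleton)
  ultimately show ?thesis
    by (subst sem_decomp) (intro recognizable_Un recognizable_sem_Int_Nil)
qed

lemma recognizable_sem_if_shift_bounded:
  fixes L :: "('s,'g) word set"
  shows "regular L \<Longrightarrow> \<forall>z\<in>L. shift z \<le> C \<Longrightarrow> recognizable (sem ` L)"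
proof (induction C arbitrary: L)
  case 0
  show ?case
    by (rule recognizable_sem_step[OF _ 0]) (auto simp: recognizable_empty)
next
  case (Suc C)
  show ?case
    by (rule recognizable_sem_step[OF _ Suc.prems]) (simp add: Suc.IH)
qed

lemma recognizable_sem:
  fixes L :: "('s,'g) word set"
  assumes "regular L" "finite_shift L"
  shows "recognizable (sem ` L)"
  using assms recognizable_sem_if_shift_bounded unfolding finite_shift_iff by blast

section \<open>Offsets between synchronisations\<close>

type_synonym ('s,'g) offset = "'s list \<times> 's list \<times> 'g list \<times> 'g list"

definition comparable :: "('s,'g) word \<Rightarrow> ('s,'g) word \<Rightarrow> bool" where
  "comparable u v \<longleftrightarrow> (prefix (pi_i u) (pi_i v) \<or> prefix (pi_i v) (pi_i u)) \<and>
                       (prefix (pi_o u) (pi_o v) \<or> prefix (pi_o v) (pi_o u))"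

text \<open>The excess of the input and output projections of u over those of v and vice versa: the
  buffer needed to continue v @ r and u @ z in parallel.\<close>

definition offset :: "('s,'g) word \<Rightarrow> ('s,'g) word \<Rightarrow> ('s,'g) offset" where
  "offset u v = (drop (length (pi_i v)) (pi_i u), drop (length (pi_i u)) (pi_i v),
                 drop (length (pi_o v)) (pi_o u), drop (length (pi_o u)) (pi_o v))"

fun matches :: "('s,'g) offset \<Rightarrow> ('s,'g) word \<Rightarrow> ('s,'g) word \<Rightarrow> bool" where
  "matches (eu, ev, fu, fv) r z \<longleftrightarrow> ev @ pi_i r = eu @ pi_i z \<and> fv @ pi_o r = fu @ pi_o z"

definition bounded_offsets :: "nat \<Rightarrow> ('s,'g) offset set" where
  "bounded_offsets n =
     {xs. length xs \<le> n} \<times> {xs. length xs \<le> n} \<times> {xs. length xs \<le> n} \<times> {xs. length xs \<le> n}"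

lemma finite_lists_length_le_UNIV: "finite {xs :: ('a::finite) list. length xs \<le> n}"
  using finite_lists_length_le[of "UNIV :: 'a set" n] by simp

lemma finite_bounded_offsets:
  "finite (bounded_offsets n :: ('s::finite, 'g::finite) offset set)"
  unfolding bounded_offsets_def by (intro finite_cartesian_product finite_lists_length_le_UNIV)

lemma append_eq_append_iff_drop:
  assumes "prefix a b \<or> prefix b a"
  shows "b @ r = a @ z \<longleftrightarrow> drop (length a) b @ r = drop (length b) a @ z"
  using assms
proof
  assume "prefix a b"
  then obtain e where "b = a @ e"
    by (auto simp: prefix_def)
  then show ?thesis
    by simp
next
  assume "prefix b a"
  then obtain e where "a = b @ e"
    by (auto simp: prefix_def)
  then show ?thesis
    by simp
qed

lemma sem_append_eq_iff_matches:
  assumes "comparable u v"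
  shows "sem (v @ r) = sem (u @ z) \<longleftrightarrow> matches (offset u v) r z"
proof -
  have "pi_i v @ pi_i r = pi_i u @ pi_i z \<longleftrightarrow>
      drop (length (pi_i u)) (pi_i v) @ pi_i r = drop (length (pi_i v)) (pi_i u) @ pi_i z"
    using assms unfolding comparable_def by (intro append_eq_append_iff_drop) blast
  moreover have "pi_o v @ pi_o r = pi_o u @ pi_o z \<longleftrightarrow>
      drop (length (pi_o u)) (pi_o v) @ pi_o r = drop (length (pi_o v)) (pi_o u) @ pi_o z"
    using assms unfolding comparable_def by (intro append_eq_append_iff_drop) blast
  ultimately show ?thesis
    unfolding offset_def matches.simps sem_append by simp
qed

lemma comparable_if_sem_append_eq:
  assumes "sem (v @ r) = sem (u @ z)"
  shows "comparable u v"
proof -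
  have i: "pi_i v @ pi_i r = pi_i u @ pi_i z" and o: "pi_o v @ pi_o r = pi_o u @ pi_o z"
    using assms unfolding sem_append by auto
  have "prefix (pi_i u) (pi_i u @ pi_i z)" "prefix (pi_i v) (pi_i u @ pi_i z)"
    using i by (metis prefix_def)+
  then have "prefix (pi_i u) (pi_i v) \<or> prefix (pi_i v) (pi_i u)"
    by (rule prefix_same_cases)
  moreover have "prefix (pi_o u) (pi_o u @ pi_o z)" "prefix (pi_o v) (pi_o u @ pi_o z)"
    using o by (metis prefix_def)+
  then have "prefix (pi_o u) (pi_o v) \<or> prefix (pi_o v) (pi_o u)"
    by (rule prefix_same_cases)
  ultimately show ?thesis
    unfolding comparable_def by blast
qed

lemma offset_in_bounded_offsets:
  assumes "length u = length v" "word_lag u \<le> int n" "word_lag v \<le> int n"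
  shows "offset u v \<in> bounded_offsets n"
proof -
  have "length (pi_i u) + length (pi_o u) = length (pi_i v) + length (pi_o v)"
    using assms(1) by (simp add: length_pi_i_plus_pi_o)
  then have "length (pi_i u) - length (pi_i v) \<le> n" "length (pi_i v) - length (pi_i u) \<le> n"
    "length (pi_o u) - length (pi_o v) \<le> n" "length (pi_o v) - length (pi_o u) \<le> n"
    using assms(2,3) unfolding word_lag_def by linarith+
  then show ?thesis
    unfolding offset_def bounded_offsets_def by simp
qed

definition matching_words :: "('s,'g) word set \<Rightarrow> ('s,'g) offset \<Rightarrow> ('s,'g) word set" where
  "matching_words L D = {z. \<exists>r\<in>L. matches D r z}"

lemma matching_words_eq:
  "matching_words L (eu, ev, fu, fv) = sem -` rel_lquot eu fu (rel_conc {(ev, fv)} (sem ` L))"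
proof (intro set_eqI iffI)
  fix y
  assume "y \<in> matching_words L (eu, ev, fu, fv)"
  then obtain r where r: "r \<in> L" "ev @ pi_i r = eu @ pi_i y" "fv @ pi_o r = fu @ pi_o y"
    unfolding matching_words_def by auto
  have "(ev @ pi_i r, fv @ pi_o r) \<in> rel_conc {(ev, fv)} (sem ` L)"
    using r(1) by (intro rel_concI) (auto simp: sem_def)
  then show "y \<in> sem -` rel_lquot eu fu (rel_conc {(ev, fv)} (sem ` L))"
    unfolding rel_lquot_def sem_def using r(2,3) by simp
next
  fix y
  assume "y \<in> sem -` rel_lquot eu fu (rel_conc {(ev, fv)} (sem ` L))"
  then have "(eu @ pi_i y, fu @ pi_o y) \<in> rel_conc {(ev, fv)} (sem ` L)"
    unfolding rel_lquot_def sem_def by simp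
  then obtain a b c d where h: "(eu @ pi_i y, fu @ pi_o y) = (a @ c, b @ d)"
    "(a, b) \<in> {(ev, fv)}" "(c, d) \<in> sem ` L"
    by (rule rel_concE)
  then obtain r where "r \<in> L" "(c, d) = sem r"
    by blast
  then show "y \<in> matching_words L (eu, ev, fu, fv)"
    unfolding matching_words_def using h by (auto simp: sem_def)
qed

lemma regular_matching_words:
  assumes "regular L" "finite_shift L"
  shows "regular (matching_words L D)"
  using assms
  by (cases D) (simp only: matching_words_eq, intro regular_sem_vimage recognizable_rel_lquot
      recognizable_rel_conc recognizable_singleton recognizable_sem)

section \<open>Domination\<close>

text \<open>Phrased through positions rather than through \<open>first_good\<close> (see
  \<open>good_first_iff_first_good\<close>) so that it survives passing to quotients
  (\<open>good_first_append\<close>).\<close>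

definition good_first ::
  "bool \<Rightarrow> ('s,'g) word set \<Rightarrow> ('s,'g) word set \<Rightarrow> ('s,'g) word \<Rightarrow> ('s,'g) word \<Rightarrow> bool" where
  "good_first strict T1 T2 r z \<longleftrightarrow>
     (\<not> strict \<and> (\<forall>i\<le>length z. bad T1 (take i r) \<and> bad T2 (take i z))) \<or>
     (\<exists>j\<le>length z. \<not> bad T1 (take j r) \<and> (\<forall>i<j. bad T1 (take i r) \<and> bad T2 (take i z)) \<and>
        (strict \<longrightarrow> bad T2 (take j z)))"

definition good_first_at ::
  "bool \<Rightarrow> ('s,'g) word set \<Rightarrow> ('s,'g) word \<Rightarrow> ('s,'g) word \<Rightarrow> nat \<Rightarrow> bool" where
  "good_first_at strict T u v j \<longleftrightarrow>
     j \<le> length u \<and> length v = j \<and> \<not> bad T v \<and> (\<forall>i<j. bad T (take i v) \<and> bad T (take i u)) \<and>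
     (strict \<longrightarrow> bad T (take j u))"

definition dominated :: "bool \<Rightarrow> ('s,'g) word set \<Rightarrow> ('s,'g) word set \<Rightarrow> ('s,'g) word set" where
  "dominated strict T P = {w \<in> T. \<exists>m\<in>P. sem m = sem w \<and> good_first strict T T m w}"

lemma good_first_append:
  assumes "length v = length u" "bad T v" "bad T u"
  shows "good_first strict T T (v @ r) (u @ z) \<longleftrightarrow> good_first strict (lquot v T) (lquot u T) r z"
proof -
  let ?n = "length u"
  have low: "bad T (take i (v @ r)) \<and> bad T (take i (u @ z))" if "i \<le> ?n" for i
    using that assms(1) bad_take[OF assms(2), of i] bad_take[OF assms(3), of i] by simp
  have high: "bad T (take (?n + k) (v @ r)) \<longleftrightarrow> bad (lquot v T) (take k r)"
    "bad T (take (?n + k) (u @ z)) \<longleftrightarrow> bad (lquot u T) (take k z)" for k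
    using assms(1) by (simp_all add: bad_append)
  have split: "(\<forall>i<?n + k. bad T (take i (v @ r)) \<and> bad T (take i (u @ z))) \<longleftrightarrow>
      (\<forall>i<k. bad (lquot v T) (take i r) \<and> bad (lquot u T) (take i z))" for k
  proof
    assume "\<forall>i<?n + k. bad T (take i (v @ r)) \<and> bad T (take i (u @ z))"
    then show "\<forall>i<k. bad (lquot v T) (take i r) \<and> bad (lquot u T) (take i z)"
      using high by (metis add_less_cancel_left)
  next
    assume *: "\<forall>i<k. bad (lquot v T) (take i r) \<and> bad (lquot u T) (take i z)"
    show "\<forall>i<?n + k. bad T (take i (v @ r)) \<and> bad T (take i (u @ z))"
    proof (intro allI impI)
      fix i
      assume "i < ?n + k"
      then show "bad T (take i (v @ r)) \<and> bad T (take i (u @ z))"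
        using low[of i] * high[of "i - ?n"] by (cases "i \<le> ?n") auto
    qed
  qed
  have good_late: "\<not> bad T (take j (v @ r)) \<Longrightarrow> \<exists>k. j = ?n + k" for j
    using low[of j] by (metis le_add_diff_inverse nle_le)
  define wins where "wins j \<longleftrightarrow> \<not> bad T (take j (v @ r)) \<and>
    (\<forall>i<j. bad T (take i (v @ r)) \<and> bad T (take i (u @ z))) \<and> (strict \<longrightarrow> bad T (take j (u @ z)))"
    for j
  define wins' where "wins' k \<longleftrightarrow> \<not> bad (lquot v T) (take k r) \<and>
    (\<forall>i<k. bad (lquot v T) (take i r) \<and> bad (lquot u T) (take i z)) \<and>
    (strict \<longrightarrow> bad (lquot u T) (take k z))" for k
  have "wins (?n + k) \<longleftrightarrow> wins' k" for k
    unfolding wins_def wins'_def using split[of k] high[of k] by blast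
  then have "(\<exists>j\<le>length (u @ z). wins j) \<longleftrightarrow> (\<exists>k\<le>length z. wins' k)"
    using good_late unfolding wins_def by (metis add_le_cancel_left length_append)
  moreover have "(\<forall>i\<le>length (u @ z). bad T (take i (v @ r)) \<and> bad T (take i (u @ z))) \<longleftrightarrow>
      (\<forall>i\<le>length z. bad (lquot v T) (take i r) \<and> bad (lquot u T) (take i z))"
    using split[of "Suc (length z)"] by (simp add: less_Suc_eq_le)
  ultimately show ?thesis
    unfolding good_first_def wins_def wins'_def by simp
qed

lemma good_first_if_good_first_at:
  assumes "good_first_at strict T u v j"
  shows "good_first strict T T (v @ r) (u @ z)"
proof -
  have "take i (v @ r) = take i v" "take i (u @ z) = take i u" if "i \<le> j" for i
    using that assms unfolding good_first_at_def by simp_all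
  then show ?thesis
    using assms unfolding good_first_at_def good_first_def
    by (intro disjI2 exI[of _ j]) auto
qed

lemma good_first_cases:
  assumes "good_first strict T T m (u @ z)" "length m = length (u @ z)"
  shows "bad T (take (length u) m) \<and> bad T u \<or> (\<exists>j\<le>length u. good_first_at strict T u (take j m) j)"
  using assms(1) unfolding good_first_def
proof (elim disjE exE conjE)
  assume "\<forall>i\<le>length (u @ z). bad T (take i m) \<and> bad T (take i (u @ z))"
  then show ?thesis
    by (metis append_eq_conv_conj le_add1 length_append)
next
  fix j
  assume j: "j \<le> length (u @ z)" "\<not> bad T (take j m)"
    "\<forall>i<j. bad T (take i m) \<and> bad T (take i (u @ z))" "strict \<longrightarrow> bad T (take j (u @ z))"
  show ?thesis
  proof (cases "j \<le> length u")
    case True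
    then have "good_first_at strict T u (take j m) j"
      using j assms(2) unfolding good_first_at_def by simp
    then show ?thesis
      using True by blast
  next
    case False
    then show ?thesis
      using j(3) by (metis append_eq_conv_conj not_le_imp_less)
  qed
qed

text \<open>After reading u, a witness m = v @ r for u @ z is either still bad together with u, and
  then only the quotients at v and the offset of u and v matter (\<open>pending_configs\<close>), or it
  became good at some j \<le> length u, after which one only has to match a language of finite
  shift (\<open>settled_quots\<close>).\<close>

definition pending_lang ::
  "bool \<Rightarrow> ('s,'g) word set \<Rightarrow> ('s,'g) word set \<Rightarrow> ('s,'g) word set \<Rightarrow> ('s,'g) offset \<Rightarrow> ('s,'g) word set" where
  "pending_lang strict U P V D = {z. \<exists>r\<in>P. matches D r z \<and> good_first strict V U r z}"

definition pending_configs ::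
  "('s,'g) word set \<Rightarrow> ('s,'g) word set \<Rightarrow> ('s,'g) word \<Rightarrow>
     (('s,'g) word set \<times> ('s,'g) word set \<times> ('s,'g) offset) set" where
  "pending_configs T P u = {(lquot v P, lquot v T, offset u v) | v.
      length v = length u \<and> bad T v \<and> bad T u \<and> comparable u v}"

definition settled_quots ::
  "bool \<Rightarrow> ('s,'g) word set \<Rightarrow> ('s,'g) word set \<Rightarrow> ('s,'g) word \<Rightarrow> ('s,'g) word set set" where
  "settled_quots strict T P u = {lquot (drop j u) (matching_words (lquot v P) (offset (take j u) v)) | j v.
      good_first_at strict T u v j \<and> comparable (take j u) v}"

lemma mem_pending_lang:
  assumes "m \<in> P" "sem m = sem (u @ z)" "good_first strict T T m (u @ z)"
    and bad: "bad T (take (length u) m)" "bad T u"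
  shows "z \<in> (\<Union>(P', V, D)\<in>pending_configs T P u. pending_lang strict (lquot u T) P' V D)"
proof -
  define v where "v = take (length u) m"
  define r where "r = drop (length u) m"
  have vr: "m = v @ r" "length v = length u"
    unfolding v_def r_def using length_eq_if_sem_eq[OF assms(2)] by simp_all
  then have "sem (v @ r) = sem (u @ z)"
    using assms(2) by simp
  then have "comparable u v" "matches (offset u v) r z"
    using comparable_if_sem_append_eq sem_append_eq_iff_matches by blast+
  moreover have "good_first strict (lquot v T) (lquot u T) r z"
    using assms(3) good_first_append[of v u T strict r z] vr bad unfolding v_def by simp
  moreover have "r \<in> lquot v P"
    using assms(1) vr unfolding lquot_def by simp
  ultimately have "(lquot v P, lquot v T, offset u v) \<in> pending_configs T P u"
    "z \<in> pending_lang strict (lquot u T) (lquot v P) (lquot v T) (offset u v)"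
    using vr(2) bad unfolding pending_configs_def pending_lang_def v_def by auto
  then show ?thesis
    by blast
qed

lemma mem_settled_quots:
  assumes "m \<in> P" "sem m = sem (u @ z)" "good_first_at strict T u (take j m) j"
  shows "z \<in> \<Union>(settled_quots strict T P u)"
proof -
  define v where "v = take j m"
  have "sem (v @ drop j m) = sem (take j u @ (drop j u @ z))"
    using assms(2) unfolding v_def by (metis append_assoc append_take_drop_id)
  then have "comparable (take j u) v" "matches (offset (take j u) v) (drop j m) (drop j u @ z)"
    using comparable_if_sem_append_eq sem_append_eq_iff_matches by blast+
  moreover have "drop j m \<in> lquot v P"
    using assms(1) unfolding v_def lquot_def by simp
  ultimately have "z \<in> lquot (drop j u) (matching_words (lquot v P) (offset (take j u) v))"
    "lquot (drop j u) (matching_words (lquot v P) (offset (take j u) v)) \<in> settled_quots strict T P u"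
    using assms(3) unfolding matching_words_def lquot_def settled_quots_def v_def by blast+
  then show ?thesis
    by blast
qed

lemma lquot_dominated_subset:
  "lquot u (dominated strict T P) \<subseteq> lquot u T \<inter>
    ((\<Union>(P', V, D)\<in>pending_configs T P u. pending_lang strict (lquot u T) P' V D) \<union>
     \<Union>(settled_quots strict T P u))"
proof
  fix z
  assume z: "z \<in> lquot u (dominated strict T P)"
  then obtain m where m: "m \<in> P" "sem m = sem (u @ z)" "good_first strict T T m (u @ z)"
    unfolding lquot_def dominated_def by blast
  have "length m = length (u @ z)"
    using m(2) by (rule length_eq_if_sem_eq)
  then show "z \<in> lquot u T \<inter>
    ((\<Union>(P', V, D)\<in>pending_configs T P u. pending_lang strict (lquot u T) P' V D) \<union>
     \<Union>(settled_quots strict T P u))"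
    using z good_first_cases[OF m(3)] mem_pending_lang[OF m] mem_settled_quots[OF m(1,2)]
    unfolding lquot_def dominated_def by blast
qed

lemma lquot_dominated_supset:
  "lquot u T \<inter> ((\<Union>(P', V, D)\<in>pending_configs T P u. pending_lang strict (lquot u T) P' V D) \<union>
     \<Union>(settled_quots strict T P u)) \<subseteq> lquot u (dominated strict T P)"
proof
  fix z
  assume z: "z \<in> lquot u T \<inter> ((\<Union>(P', V, D)\<in>pending_configs T P u. pending_lang strict (lquot u T) P' V D) \<union>
     \<Union>(settled_quots strict T P u))"
  have "\<exists>m\<in>P. sem m = sem (u @ z) \<and> good_first strict T T m (u @ z)"
    using z
  proof (elim IntE UnE UN_E UnionE)
    fix c
    assume "c \<in> pending_configs T P u" "z \<in> (\<lambda>(P', V, D). pending_lang strict (lquot u T) P' V D) c"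
    then obtain v r where "length v = length u" "bad T v" "bad T u" "comparable u v" "v @ r \<in> P"
      "matches (offset u v) r z" "good_first strict (lquot v T) (lquot u T) r z"
      unfolding pending_configs_def pending_lang_def lquot_def by auto
    then show ?thesis
      using sem_append_eq_iff_matches good_first_append by blast
  next
    fix K
    assume "K \<in> settled_quots strict T P u" "z \<in> K"
    then obtain j v r where "good_first_at strict T u v j" "comparable (take j u) v" "v @ r \<in> P"
      "matches (offset (take j u) v) r (drop j u @ z)"
      unfolding settled_quots_def matching_words_def lquot_def by auto
    moreover from this have "sem (v @ r) = sem (u @ z)"
      using sem_append_eq_iff_matches[of "take j u" v r "drop j u @ z"]
      by (metis append_assoc append_take_drop_id)
    ultimately show ?thesis
      using good_first_if_good_first_at by blast
  qed
  then show "z \<in> lquot u (dominated strict T P)"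
    using z unfolding lquot_def dominated_def by simp
qed

lemma lquot_dominated:
  "lquot u (dominated strict T P) = lquot u T \<inter>
     ((\<Union>(P', V, D)\<in>pending_configs T P u. pending_lang strict (lquot u T) P' V D) \<union>
      \<Union>(settled_quots strict T P u))"
  by (intro equalityI lquot_dominated_subset lquot_dominated_supset)

lemma word_lag_take_le_if_bad_below:
  assumes "\<And>x. bad T x \<Longrightarrow> word_lag x \<le> int B" "\<forall>i<j. bad T (take i x)"
  shows "word_lag (take j x) \<le> int (B + 1)"
proof (cases j)
  case (Suc k)
  then have "word_lag (take k x) \<le> int B"
    using assms by blast
  then show ?thesis
    using word_lag_take_Suc[of k x] Suc by simp
qed simp

lemma pending_configs_subset:
  assumes "\<And>x. bad T x \<Longrightarrow> word_lag x \<le> int B"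
  shows "pending_configs T P u \<subseteq> range (\<lambda>x. lquot x P) \<times> range (\<lambda>x. lquot x T) \<times> bounded_offsets B"
  using assms unfolding pending_configs_def by (auto intro!: offset_in_bounded_offsets)

lemma settled_quots_subset:
  assumes "\<And>x. bad T x \<Longrightarrow> word_lag x \<le> int B" "P \<subseteq> T"
  shows "settled_quots strict T P u \<subseteq>
    (\<Union>(L, D)\<in>{L \<in> range (\<lambda>x. lquot x P). finite_shift L} \<times> bounded_offsets (B + 1).
       range (\<lambda>x. lquot x (matching_words L D)))"
proof
  fix K
  assume "K \<in> settled_quots strict T P u"
  then obtain j v where K: "K = lquot (drop j u) (matching_words (lquot v P) (offset (take j u) v))"
    and v: "good_first_at strict T u v j"
    unfolding settled_quots_def by blast
  have "lquot v P \<subseteq> lquot v T" "finite_shift (lquot v T)"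
    using assms(2) v unfolding lquot_def good_first_at_def bad_def by auto
  then have "finite_shift (lquot v P)"
    by (rule finite_shift_subset)
  moreover have "offset (take j u) v \<in> bounded_offsets (B + 1)"
  proof (rule offset_in_bounded_offsets)
    show "length (take j u) = length v" "word_lag (take j u) \<le> int (B + 1)"
      using v word_lag_take_le_if_bad_below[OF assms(1)] unfolding good_first_at_def by auto
    show "word_lag v \<le> int (B + 1)"
      using v word_lag_take_le_if_bad_below[OF assms(1), where j=j and x=v]
      unfolding good_first_at_def by auto
  qed
  ultimately show "K \<in> (\<Union>(L, D)\<in>{L \<in> range (\<lambda>x. lquot x P). finite_shift L} \<times> bounded_offsets (B + 1).
       range (\<lambda>x. lquot x (matching_words L D)))"
    unfolding K by blast
qed

lemma finite_settled_lquots: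
  fixes P :: "('s::finite, 'g::finite) word set"
  assumes "regular P"
  shows "finite (\<Union>(L, D)\<in>{L \<in> range (\<lambda>x. lquot x P). finite_shift L} \<times> bounded_offsets n.
    range (\<lambda>x. lquot x (matching_words L D)))"
proof (rule finite_UN_I)
  have "finite {L \<in> range (\<lambda>x. lquot x P). finite_shift L}"
    using assms by (simp add: regular_iff_finite_lquots)
  then show "finite ({L \<in> range (\<lambda>x. lquot x P). finite_shift L} \<times>
      (bounded_offsets n :: ('s, 'g) offset set))"
    by (intro finite_cartesian_product finite_bounded_offsets)
next
  fix LD :: "('s,'g) word set \<times> ('s,'g) offset"
  assume "LD \<in> {L \<in> range (\<lambda>x. lquot x P). finite_shift L} \<times> bounded_offsets n"
  then obtain x D where LD: "LD = (lquot x P, D)" "finite_shift (lquot x P)"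
    by auto
  have "regular (lquot x P)"
    using assms by (rule regular_lquot)
  then show "finite ((\<lambda>(L, D). range (\<lambda>x. lquot x (matching_words L D))) LD)"
    using regular_matching_words[OF _ LD(2)] unfolding LD(1) regular_iff_finite_lquots by simp
qed

lemma regular_dominated:
  fixes T P :: "('s::finite, 'g::finite) word set"
  assumes "regular T" "regular P" "P \<subseteq> T" and B: "\<And>x. bad T x \<Longrightarrow> word_lag x \<le> int B"
  shows "regular (dominated strict T P)"
proof -
  define Pending :: "(('s,'g) word set \<times> ('s,'g) word set \<times> ('s,'g) offset) set"
    where "Pending = range (\<lambda>x. lquot x P) \<times> range (\<lambda>x. lquot x T) \<times> bounded_offsets B"
  define Settled where "Settled = (\<Union>(L, D)\<in>{L \<in> range (\<lambda>x. lquot x P). finite_shift L} \<times>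
    (bounded_offsets (B + 1) :: ('s,'g) offset set). range (\<lambda>x. lquot x (matching_words L D)))"
  have "finite Pending"
    unfolding Pending_def using assms(1,2)
    by (intro finite_cartesian_product finite_bounded_offsets) (simp_all add: regular_iff_finite_lquots)
  moreover have "finite Settled"
    unfolding Settled_def using assms(2) by (rule finite_settled_lquots)
  moreover have "pending_configs T P u \<in> Pow Pending" for u
    unfolding Pending_def using pending_configs_subset[OF B] by (rule PowI)
  moreover have "settled_quots strict T P u \<in> Pow Settled" for u
    unfolding Settled_def using settled_quots_subset[OF B assms(3)] by (rule PowI)
  ultimately show ?thesis
  proof (intro regularI_lquot[where
        \<sigma>="\<lambda>u. (lquot u T, pending_configs T P u, settled_quots strict T P u)"
        and U="range (\<lambda>x. lquot x T) \<times> Pow Pending \<times> Pow Settled"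
        and G="\<lambda>(U, A, S). U \<inter> ((\<Union>(P', V, D)\<in>A. pending_lang strict U P' V D) \<union> \<Union>S)"])
    show "finite (range (\<lambda>x. lquot x T) \<times> Pow Pending \<times> Pow Settled)"
      using assms(1) \<open>finite Pending\<close> \<open>finite Settled\<close> by (simp add: regular_iff_finite_lquots)
  qed (simp_all add: lquot_dominated)
qed

section \<open>Minimal synchronisations\<close>

text \<open>\<open>Suc (length w)\<close> encodes that no prefix of w is good.\<close>

definition first_good :: "('s,'g) word set \<Rightarrow> ('s,'g) word \<Rightarrow> nat" where
  "first_good T w = (LEAST j. j = Suc (length w) \<or> \<not> bad T (take j w))"

lemma first_good_le: "first_good T w \<le> Suc (length w)"
  unfolding first_good_def by (rule Least_le) simp

lemma bad_take_iff_less_first_good: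
  assumes "i \<le> length w"
  shows "bad T (take i w) \<longleftrightarrow> i < first_good T w"
proof
  assume bad: "bad T (take i w)"
  show "i < first_good T w"
  proof (rule ccontr)
    assume "\<not> i < first_good T w"
    then have "first_good T w \<le> i"
      by simp
    then have "first_good T w \<noteq> Suc (length w)" "bad T (take (first_good T w) w)"
      using assms bad_take_mono[OF bad] by auto
    moreover have "first_good T w = Suc (length w) \<or> \<not> bad T (take (first_good T w) w)"
      unfolding first_good_def by (rule LeastI[of _ "Suc (length w)"]) simp
    ultimately show False
      by blast
  qed
next
  assume "i < first_good T w"
  then show "bad T (take i w)"
    using assms unfolding first_good_def by (auto dest: not_less_Least)
qed

lemma first_good_order_if_good_first:
  assumes "length m = length w" "good_first strict T T m w"
  shows "if strict then first_good T m < first_good T w else first_good T m \<le> first_good T w"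
proof -
  let ?n = "length w" and ?fm = "first_good T m" and ?fw = "first_good T w"
  have fm: "bad T (take i m) \<longleftrightarrow> i < ?fm" and fw: "bad T (take i w) \<longleftrightarrow> i < ?fw" if "i \<le> ?n" for i
    using that assms(1) bad_take_iff_less_first_good by metis+
  show ?thesis
    using assms(2) unfolding good_first_def
  proof (elim disjE exE conjE)
    assume "\<not> strict" "\<forall>i\<le>?n. bad T (take i m) \<and> bad T (take i w)"
    then show ?thesis
      using fm[of ?n] fw[of ?n] first_good_le[of T m] first_good_le[of T w] assms(1) by auto
  next
    fix j
    assume j: "j \<le> ?n" "\<not> bad T (take j m)" "\<forall>i<j. bad T (take i m) \<and> bad T (take i w)"
      "strict \<longrightarrow> bad T (take j w)"
    have "?fm \<le> j"
      using j(1,2) fm by simp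
    moreover have "j \<le> ?fm"
    proof (rule ccontr)
      assume "\<not> j \<le> ?fm"
      then have "bad T (take ?fm m)" "?fm \<le> ?n"
        using j(1,3) by auto
      then show False
        using fm[of ?fm] by simp
    qed
    moreover have "j \<le> ?fw"
    proof (rule ccontr)
      assume "\<not> j \<le> ?fw"
      then have "bad T (take ?fw w)" "?fw \<le> ?n"
        using j(1,3) by auto
      then show False
        using fw[of ?fw] by simp
    qed
    moreover have "strict \<longrightarrow> j < ?fw"
      using j(1,4) fw by simp
    ultimately show ?thesis
      by auto
  qed
qed

lemma good_first_if_first_good_order:
  assumes "length m = length w"
    and order: "if strict then first_good T m < first_good T w else first_good T m \<le> first_good T w"
  shows "good_first strict T T m w"
proof -
  let ?n = "length w" and ?fm = "first_good T m" and ?fw = "first_good T w"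
  have fm: "bad T (take i m) \<longleftrightarrow> i < ?fm" and fw: "bad T (take i w) \<longleftrightarrow> i < ?fw" if "i \<le> ?n" for i
    using that assms(1) bad_take_iff_less_first_good by metis+
  show ?thesis
  proof (cases "?fm \<le> ?n")
    case True
    have "\<not> bad T (take ?fm m)" "\<forall>i<?fm. bad T (take i m) \<and> bad T (take i w)"
      "strict \<longrightarrow> bad T (take ?fm w)"
      using True order fm fw by (auto split: if_splits)
    then show ?thesis
      unfolding good_first_def using True by blast
  next
    case False
    then have "\<not> strict" "\<forall>i\<le>?n. bad T (take i m) \<and> bad T (take i w)"
      using order first_good_le[of T w] fm fw by (auto split: if_splits)
    then show ?thesis
      unfolding good_first_def by blast
  qed
qed

lemma good_first_iff_first_good:
  assumes "length m = length w"
  shows "good_first strict T T m w \<longleftrightarrow>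
    (if strict then first_good T m < first_good T w else first_good T m \<le> first_good T w)"
  using first_good_order_if_good_first[OF assms] good_first_if_first_good_order[OF assms] by blast

lemma RegFS_lquot_iff:
  assumes "regular T"
  shows "RegFS (lquot x T) \<longleftrightarrow> \<not> bad T x"
  unfolding RegFS_def bad_def using regular_lquot[OF assms] by blast

lemma preceq_iff_first_good:
  assumes "regular T"
  shows "preceq T w w' \<longleftrightarrow> w \<in> T \<and> w' \<in> T \<and> sem w = sem w' \<and> first_good T w \<le> first_good T w'"
proof -
  have "(\<forall>i\<le>length w. \<not> bad T (take i w') \<longrightarrow> \<not> bad T (take i w)) \<longleftrightarrow>
      first_good T w \<le> first_good T w'" if len: "length w' = length w"
  proof
    assume good: "\<forall>i\<le>length w. \<not> bad T (take i w') \<longrightarrow> \<not> bad T (take i w)"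
    show "first_good T w \<le> first_good T w'"
    proof (cases "first_good T w' \<le> length w")
      case True
      then have "\<not> bad T (take (first_good T w') w)"
        using good len bad_take_iff_less_first_good[of _ w'] by simp
      then show ?thesis
        using True bad_take_iff_less_first_good[of _ w] by (simp add: not_less)
    next
      case False
      then show ?thesis
        using first_good_le[of T w] by simp
    qed
  next
    assume order: "first_good T w \<le> first_good T w'"
    show "\<forall>i\<le>length w. \<not> bad T (take i w') \<longrightarrow> \<not> bad T (take i w)"
    proof (intro allI impI)
      fix i
      assume i: "i \<le> length w" "\<not> bad T (take i w')"
      then have "first_good T w' \<le> i"
        using len bad_take_iff_less_first_good[of i w'] by simp
      then show "\<not> bad T (take i w)"
        using i(1) order bad_take_iff_less_first_good[of i w] by simp
    qed
  qed
  moreover have "length w' = length w" if "sem w = sem w'"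
    using length_eq_if_sem_eq[OF that] by simp
  ultimately show ?thesis
    unfolding preceq_def RegFS_lquot_iff[OF assms] by blast
qed

lemma minsync_iff_first_good:
  assumes "regular T"
  shows "w \<in> minsync S T \<longleftrightarrow>
    w \<in> allsync S T \<and> (\<forall>m\<in>T. sem m = sem w \<longrightarrow> first_good T w \<le> first_good T m)"
  unfolding minsync_def allsync_def preceq_iff_first_good[OF assms] by fastforce

lemma minsync_eq_allsync_diff_dominated:
  assumes "regular T"
  shows "minsync S T = allsync S T - dominated True T T"
proof (rule set_eqI)
  fix w
  have "good_first True T T m w \<longleftrightarrow> first_good T m < first_good T w" if "sem m = sem w" for m
    using good_first_iff_first_good[of m w True T] length_eq_if_sem_eq[OF that] by simp
  then have "w \<in> dominated True T T \<longleftrightarrow>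
      w \<in> T \<and> (\<exists>m\<in>T. sem m = sem w \<and> first_good T m < first_good T w)"
    unfolding dominated_def by blast
  then show "w \<in> minsync S T \<longleftrightarrow> w \<in> allsync S T - dominated True T T"
    unfolding minsync_iff_first_good[OF assms] Diff_iff allsync_def by (auto simp: not_less)
qed

lemma allsync_eq_dominated_minsync:
  assumes "regular T"
  shows "allsync S T = dominated False T (minsync S T)"
proof (intro set_eqI iffI)
  fix w
  assume w: "w \<in> allsync S T"
  obtain m where m: "m \<in> T" "sem m = sem w"
    and least: "\<And>y. y \<in> T \<Longrightarrow> sem y = sem w \<Longrightarrow> first_good T m \<le> first_good T y"
    using ex_has_least_nat[of "\<lambda>y. y \<in> T \<and> sem y = sem w" w "first_good T"] w
    unfolding allsync_def by blast
  have "m \<in> minsync S T"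
    using m least w unfolding minsync_iff_first_good[OF assms] allsync_def by simp
  moreover have "good_first False T T m w"
    using good_first_iff_first_good[of m w False T] length_eq_if_sem_eq[OF m(2)] least[of w] w
    unfolding allsync_def by simp
  ultimately show "w \<in> dominated False T (minsync S T)"
    using w m unfolding allsync_def dominated_def by blast
next
  fix w
  assume "w \<in> dominated False T (minsync S T)"
  then show "w \<in> allsync S T"
    unfolding dominated_def minsync_def allsync_def by auto
qed

theorem mainTheorem16:
  fixes S T :: "('s::finite, 'g::finite) word set"
  assumes "regular S" and "regular T"
    and "finite_shiftlag S" and "finite_shiftlag T"
  shows "regular (minsync S T) \<longleftrightarrow> regular (allsync S T)"
proof -
  obtain B where B: "\<And>x. bad T x \<Longrightarrow> word_lag x \<le> int B"
    using bad_word_lag_bounded[OF assms(2,4)] by blast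
  have minsync_subset: "minsync S T \<subseteq> T"
    unfolding minsync_def by blast
  show ?thesis
  proof
    assume "regular (minsync S T)"
    then show "regular (allsync S T)"
      unfolding allsync_eq_dominated_minsync[OF assms(2)]
      using regular_dominated[OF assms(2) _ minsync_subset B] by blast
  next
    assume "regular (allsync S T)"
    then show "regular (minsync S T)"
      unfolding minsync_eq_allsync_diff_dominated[OF assms(2)]
      using regular_dominated[OF assms(2) assms(2) subset_refl B] by (rule regular_Diff)
  qed
qed

end
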